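(* Let $n,x$ be integers with $1<x<n$, so that $G=C_{2n}(x,1,n)$ is a $5$-regular circulant graph. If $n\equiv 0\pmod 3$, $x\equiv 1\pmod 3$ and $1<x\leq \tfrac{2n}{3}$, then $G$ is word-representable.
   Context: Two distinct letters $x,y$ alternate in a word $w$ if, after deleting all other letters from $w$, the resulting word is of the form $xyxy\cdots$ or $yxyx\cdots$ (of even or odd length). A graph $G=(V,E)$ is word-representable if there is a word $w$ over the alphabet $V$, containing every letter of $V$ at least once, such that for all distinct $x,y\in V$, $xy\in E$ if and only if $x$ and $y$ alternate in $w$. For an integer $m$ and a set $R$ of positive integers each at most $m/2$, the circulant graph $C_m(R)$ has vertex set $\{0,1,\dots,m-1\}$, with $i$ and $j$ adjacent iff $\min(|i-j|,\,m-|i-j|)\in R$. $C_{2n}(x,1,n)$ denotes the circulant graph on $2n$ vertices with jump set $\{1,x,n\}$; it is $5$-regular exactly when $1<x<n$. *)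

theory Defs
  imports Main
begin

definition alternate :: "'a list \<Rightarrow> 'a \<Rightarrow> 'a \<Rightarrow> bool" where
  "alternate w x y \<longleftrightarrow>
     (let u = filter (\<lambda>z. z = x \<or> z = y) w in
        \<forall>i. Suc i < length u \<longrightarrow> u ! i \<noteq> u ! Suc i)"

definition word_representable :: "'a set \<Rightarrow> ('a \<Rightarrow> 'a \<Rightarrow> bool) \<Rightarrow> bool" where
  "word_representable V E \<longleftrightarrow>
     (\<exists>w. set w = V \<and>
          (\<forall>x\<in>V. \<forall>y\<in>V. x \<noteq> y \<longrightarrow> (E x y \<longleftrightarrow> alternate w x y)))"

definition circ_vertices :: "nat \<Rightarrow> nat set" where
  "circ_vertices m = {0..<m}"

definition circ_adj :: "nat \<Rightarrow> nat set \<Rightarrow> nat \<Rightarrow> nat \<Rightarrow> bool" where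
  "circ_adj m R i j \<longleftrightarrow>
     (let d = nat \<bar>int i - int j\<bar> in min d (m - d) \<in> R)"

end

theory Submission
  imports Defs
begin

(* A graph with a proper 3-colouring is word-representable. List the colour classes 0, 1, 2
   and then the same classes reversed: in this word a pair of vertices alternates iff they have
   different colours. For every non-edge xy with c x < c y append a block that lists every vertex
   twice, again in the order of the colour classes, except that x and y are placed so that they
   do not alternate; all differently coloured pairs other than xy still alternate in the same order.

   For n = 3k the circulant C_6k(1, x, 3k) with x = 1 (mod 3) and x <= 2k is properly 3-coloured
   by cutting the cycle into three arcs of length 2k and giving vertex i of arc a the colour
   (i + a) mod 3. Going from i to j > i, the colour changes by (j - i) plus the number of arc
   boundaries crossed: jumps of length 1 and x <= 2k add 1 (mod 3) and cross at most one boundary,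
   jumps of length 3k add 0 and cross one or two, and the wrap-around jumps of length 6k - 1 and
   6k - x add 2 and cross both. *)

lemma alternate_iff_distinct_adj:
  "alternate w x y \<longleftrightarrow> distinct_adj (filter (\<lambda>z. z = x \<or> z = y) w)"
  by (simp add: alternate_def Let_def distinct_adj_conv_nth)

lemma alternate_commute: "alternate w x y \<longleftrightarrow> alternate w y x"
  by (simp add: alternate_iff_distinct_adj disj_commute)

lemma distinct_adj_concat_replicate:
  "p \<noteq> q \<Longrightarrow> distinct_adj (concat (replicate k [p, q, p, q]))"
proof (induction k)
  case (Suc k)
  then show ?case by (cases k) (auto simp: distinct_adj_Cons)
qed simp

lemma not_distinct_adj_append_rev: "xs \<noteq> [] \<Longrightarrow> \<not> distinct_adj (xs @ rev xs)"
  by (simp add: distinct_adj_append_iff hd_rev)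

lemma filter_pair_filter:
  assumes "distinct vs" "\<not> (P u \<and> P v)"
  shows "filter (\<lambda>z. z = u \<or> z = v) (filter P vs) =
    (if P u \<and> u \<in> set vs then [u] else []) @ (if P v \<and> v \<in> set vs then [v] else [])"
  using assms by (induction vs) auto

definition colour_class :: "'a list \<Rightarrow> ('a \<Rightarrow> nat) \<Rightarrow> nat \<Rightarrow> 'a list" where
  "colour_class vs c k = filter (\<lambda>z. c z = k) vs"

definition base_word :: "'a list \<Rightarrow> ('a \<Rightarrow> nat) \<Rightarrow> 'a list" where
  "base_word vs c =
     colour_class vs c 0 @ colour_class vs c 1 @ colour_class vs c 2 @
     rev (colour_class vs c 0) @ rev (colour_class vs c 1) @ rev (colour_class vs c 2)"

definition separating_block :: "'a list \<Rightarrow> ('a \<Rightarrow> nat) \<Rightarrow> 'a \<Rightarrow> 'a \<Rightarrow> 'a list" where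
  "separating_block vs c x y =
     (let S = (\<lambda>k. filter (\<lambda>z. c z = k \<and> z \<noteq> x \<and> z \<noteq> y) vs) in
      if c x = 0 \<and> c y = 2 then S 0 @ x # S 1 @ S 2 @ x # y # S 0 @ S 1 @ S 2 @ [y]
      else if c y = 2 then S 0 @ S 1 @ x # y # S 2 @ S 0 @ S 1 @ y # x # S 2
      else S 0 @ x # y # S 1 @ S 2 @ S 0 @ y # x # S 1 @ S 2)"

lemma filter_pair_base_word:
  assumes "distinct vs" "u \<in> set vs" "v \<in> set vs" "c u < c v" "c v < 3"
  shows "filter (\<lambda>z. z = u \<or> z = v) (base_word vs c) = [u, v, u, v]"
  using assms
  by (auto simp: base_word_def colour_class_def rev_filter[symmetric] filter_pair_filter
      simp del: filter_filter)

lemma not_distinct_adj_filter_pair_base_word: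
  assumes "u \<in> set vs" "c u = c v" "c u < 3"
  shows "\<not> distinct_adj (filter (\<lambda>z. z = u \<or> z = v) (base_word vs c))"
proof -
  let ?Q = "\<lambda>z. z = u \<or> z = v"
  have "filter ?Q (colour_class vs c k) = []" if "k \<noteq> c u" for k
    using that assms(2) by (auto simp: colour_class_def filter_empty_conv)
  moreover have "filter ?Q (colour_class vs c (c u)) \<noteq> []"
    using assms(1) by (auto simp: colour_class_def filter_empty_conv)
  moreover have "c u = 0 \<or> c u = 1 \<or> c u = 2"
    using assms(3) by linarith
  ultimately show ?thesis
    using not_distinct_adj_append_rev[of "filter ?Q (colour_class vs c (c u))"]
    by (auto simp: base_word_def rev_filter[symmetric])
qed

lemma filter_pair_separating_block:
  assumes "distinct vs" "u \<in> set vs" "v \<in> set vs" "c u < c v" "c v < 3"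
    and "c x < c y" "c y < 3" "(x, y) \<noteq> (u, v)"
  shows "filter (\<lambda>z. z = u \<or> z = v) (separating_block vs c x y) = [u, v, u, v]"
  using assms
  by (auto simp: separating_block_def filter_pair_filter simp del: filter_filter)

lemma not_distinct_adj_filter_pair_separating_block:
  assumes "c x < c y"
  shows "\<not> distinct_adj (filter (\<lambda>z. z = x \<or> z = y) (separating_block vs c x y))"
proof -
  have "filter (\<lambda>z. P z \<and> z \<noteq> x \<and> z \<noteq> y \<and> (z = x \<or> z = y)) vs = []" for P
    by (auto simp: filter_empty_conv)
  then show ?thesis
    using assms by (auto simp: separating_block_def)
qed

definition three_colouring_word ::
    "'a list \<Rightarrow> ('a \<Rightarrow> 'a \<Rightarrow> bool) \<Rightarrow> ('a \<Rightarrow> nat) \<Rightarrow> 'a list" where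
  "three_colouring_word vs E c =
     base_word vs c @
     concat (map (\<lambda>(x, y). separating_block vs c x y)
       (filter (\<lambda>(x, y). \<not> E x y \<and> c x < c y) (List.product vs vs)))"

lemma alternate_three_colouring_word:
  assumes "distinct vs" "u \<in> set vs" "v \<in> set vs" "u \<noteq> v" "c u \<le> c v"
    and colours: "\<forall>w \<in> set vs. c w < 3"
    and proper: "E u v \<Longrightarrow> c u \<noteq> c v"
  shows "alternate (three_colouring_word vs E c) u v \<longleftrightarrow> E u v"
proof -
  let ?Q = "\<lambda>z. z = u \<or> z = v"
  let ?block = "\<lambda>(x, y). filter ?Q (separating_block vs c x y)"
  let ?non_edges = "filter (\<lambda>(x, y). \<not> E x y \<and> c x < c y) (List.product vs vs)"
  have word: "filter ?Q (three_colouring_word vs E c) =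
      filter ?Q (base_word vs c) @ concat (map ?block ?non_edges)"
    by (simp add: three_colouring_word_def filter_concat case_prod_unfold comp_def)
  have cv: "c v < 3"
    using colours assms(3) by blast
  show ?thesis
  proof
    assume "E u v"
    then have "c u < c v"
      using proper assms(5) by fastforce
    have pieces: "\<forall>l \<in> set (filter ?Q (base_word vs c) # map ?block ?non_edges). l = [u, v, u, v]"
      using filter_pair_base_word[OF assms(1-3) \<open>c u < c v\<close> cv] \<open>E u v\<close> colours
        filter_pair_separating_block[OF assms(1-3) \<open>c u < c v\<close> cv]
      by auto
    have "distinct_adj (concat (filter ?Q (base_word vs c) # map ?block ?non_edges))"
      by (subst replicate_length_same[OF pieces, symmetric])
        (rule distinct_adj_concat_replicate[OF assms(4)])
    then show "alternate (three_colouring_word vs E c) u v"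
      by (simp add: alternate_iff_distinct_adj word)
  next
    assume "alternate (three_colouring_word vs E c) u v"
    then have word_alt: "distinct_adj (filter ?Q (base_word vs c) @ concat (map ?block ?non_edges))"
      by (simp add: alternate_iff_distinct_adj word)
    show "E u v"
    proof (rule ccontr)
      assume "\<not> E u v"
      show False
      proof (cases "c u = c v")
        case True
        then show False
          using not_distinct_adj_filter_pair_base_word[OF assms(2) True] cv word_alt by auto
      next
        case False
        with \<open>\<not> E u v\<close> assms have "(u, v) \<in> set ?non_edges"
          by auto
        then obtain pre post where "?non_edges = pre @ (u, v) # post"
          by (meson split_list)
        then show False
          using word_alt not_distinct_adj_filter_pair_separating_block[of c u v vs] False assms(5)
          by auto
      qed
    qed
  qed
qed

lemma set_three_colouring_word:
  assumes "\<forall>w \<in> set vs. c w < 3"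
  shows "set (three_colouring_word vs E c) = set vs"
proof
  have "set (separating_block vs c x y) \<subseteq> set vs" if "x \<in> set vs" "y \<in> set vs" for x y
    using that by (auto simp: separating_block_def Let_def)
  then show "set (three_colouring_word vs E c) \<subseteq> set vs"
    by (auto simp: three_colouring_word_def base_word_def colour_class_def)
  have "set vs \<subseteq> set (base_word vs c)"
    using assms by (auto simp: base_word_def colour_class_def less_Suc_eq numeral_3_eq_3)
  then show "set vs \<subseteq> set (three_colouring_word vs E c)"
    by (auto simp: three_colouring_word_def)
qed

theorem word_representable_if_three_colourable:
  assumes "finite V"
    and sym: "\<And>u v. u \<in> V \<Longrightarrow> v \<in> V \<Longrightarrow> E u v \<Longrightarrow> E v u"
    and colours: "\<And>v. v \<in> V \<Longrightarrow> c v < (3 :: nat)"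
    and proper: "\<And>u v. u \<in> V \<Longrightarrow> v \<in> V \<Longrightarrow> u \<noteq> v \<Longrightarrow> E u v \<Longrightarrow> c u \<noteq> c v"
  shows "word_representable V E"
proof -
  obtain vs where vs: "set vs = V" "distinct vs"
    using finite_distinct_list[OF \<open>finite V\<close>] by blast
  have colours_vs: "\<forall>w \<in> set vs. c w < 3"
    using colours vs by blast
  let ?w = "three_colouring_word vs E c"
  have ordered: "E u v \<longleftrightarrow> alternate ?w u v"
    if "u \<in> V" "v \<in> V" "u \<noteq> v" "c u \<le> c v" for u v
  proof (rule alternate_three_colouring_word[symmetric, OF _ _ _ _ _ colours_vs])
    show "E u v \<Longrightarrow> c u \<noteq> c v"
      using proper that by blast
  qed (use that vs in auto)
  have "E u v \<longleftrightarrow> alternate ?w u v" if "u \<in> V" "v \<in> V" "u \<noteq> v" for u v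
  proof (cases "c u \<le> c v")
    case False
    then have "E v u \<longleftrightarrow> alternate ?w v u"
      using ordered[of v u] that by simp
    then show ?thesis
      using sym[OF that(1,2)] sym[OF that(2,1)] alternate_commute[of ?w u v] by blast
  qed (rule ordered[OF that])
  moreover have "set ?w = V"
    using set_three_colouring_word[OF colours_vs] vs(1) by blast
  ultimately show ?thesis
    unfolding word_representable_def by blast
qed

definition arc_shifted_colouring :: "nat \<Rightarrow> nat \<Rightarrow> nat" where
  "arc_shifted_colouring L i = (i + i div L) mod 3"

lemma arc_shifted_colouring_eq_iff:
  assumes "i \<le> j"
  shows "arc_shifted_colouring L i = arc_shifted_colouring L j \<longleftrightarrow>
    3 dvd (j - i) + (j div L - i div L)"
proof -
  have "(j + j div L) - (i + i div L) = (j - i) + (j div L - i div L)"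
    using assms div_le_mono[OF assms, of L] by linarith
  then show ?thesis
    using mod_eq_dvd_iff_nat[of "i + i div L" "j + j div L" 3] assms div_le_mono[OF assms, of L]
    unfolding arc_shifted_colouring_def by auto
qed

lemma div_cases_less_3_mult:
  fixes l L :: nat
  assumes "l < 3 * L"
  obtains "l < L" "l div L = 0"
    | "L \<le> l" "l < 2 * L" "l div L = 1"
    | "2 * L \<le> l" "l div L = 2"
proof -
  consider "l < L" | "L \<le> l" "l < 2 * L" | "2 * L \<le> l"
    by linarith
  then show thesis
  proof cases
    case 1 then show ?thesis using that(1) by simp
  next
    case 2 then show ?thesis using that(2) div_nat_eqI[of L 1 l] by simp
  next
    case 3 then show ?thesis using that(3) div_nat_eqI[of L 2 l] assms by simp
  qed
qed

lemma arc_shifted_colouring_differs: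
  assumes "i < j" "j < 3 * L"
    and "(j - i) mod 3 = 1 \<and> j - i \<le> L
       \<or> (j - i) mod 3 = 0 \<and> L \<le> j - i \<and> j - i < 2 * L
       \<or> (j - i) mod 3 \<noteq> 1 \<and> 2 * L \<le> j - i"
  shows "arc_shifted_colouring L i \<noteq> arc_shifted_colouring L j"
proof -
  define e where "e = j - i"
  define d where "d = j div L - i div L"
  have "i < 3 * L"
    using assms(1,2) by linarith
  then have crossings:
    "d \<le> 2" "e \<le> L \<Longrightarrow> d \<le> 1" "L \<le> e \<Longrightarrow> 1 \<le> d" "2 * L \<le> e \<Longrightarrow> d = 2"
    unfolding d_def e_def
    by (cases rule: div_cases_less_3_mult; cases rule: div_cases_less_3_mult[OF assms(2)];
        use assms(1,2) in auto)+
  have "\<not> 3 dvd e + d"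
    using assms(3) unfolding e_def[symmetric]
  proof (elim disjE conjE)
    assume "e mod 3 = 1" "e \<le> L"
    with crossings(2) show ?thesis by presburger
  next
    assume "e mod 3 = 0" "L \<le> e"
    with crossings(1,3) show ?thesis by presburger
  next
    assume "e mod 3 \<noteq> 1" "2 * L \<le> e"
    with crossings(4) show ?thesis by presburger
  qed
  then show ?thesis
    using arc_shifted_colouring_eq_iff[of i j L] assms(1) unfolding d_def e_def by simp
qed

lemma mod_3_neq_1_if_add_mod_3_eq_0:
  fixes a b :: nat
  assumes "(a + b) mod 3 = 0" "b mod 3 = 1"
  shows "a mod 3 \<noteq> 1"
proof
  assume "a mod 3 = 1"
  then show False
    using assms mod_add_eq[of a 3 b] by (simp only:) simp
qed

lemma circulant_distance_cases:
  fixes x k e :: nat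
  assumes "x mod 3 = 1" "x \<le> 2 * k" "e < 6 * k" "min e (6 * k - e) \<in> {1, x, 3 * k}"
  shows "e mod 3 = 1 \<and> e \<le> 2 * k
    \<or> e mod 3 = 0 \<and> 2 * k \<le> e \<and> e < 4 * k
    \<or> e mod 3 \<noteq> 1 \<and> 4 * k \<le> e"
proof -
  have "1 \<le> x"
    using assms(1) by (cases x) auto
  consider "e = 1" | "e = x" | "e = 3 * k" | "e + 1 = 6 * k" | "e + x = 6 * k"
    using assms(3,4) by (auto simp: min_def split: if_splits)
  then show ?thesis
  proof cases
    case 4
    then have "e mod 3 \<noteq> 1"
      using mod_3_neq_1_if_add_mod_3_eq_0[of e 1] by simp
    with 4 \<open>1 \<le> x\<close> assms(2) show ?thesis by linarith
  next
    case 5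
    then have "e mod 3 \<noteq> 1"
      using mod_3_neq_1_if_add_mod_3_eq_0[of e x] assms(1) by simp
    with 5 assms(2) show ?thesis by linarith
  qed (use assms(1,2) \<open>1 \<le> x\<close> in auto)
qed

lemma circ_adj_commute: "circ_adj m R u v \<longleftrightarrow> circ_adj m R v u"
  by (simp add: circ_adj_def abs_minus_commute)

lemma arc_shifted_colouring_proper:
  assumes "x mod 3 = 1" "x \<le> 2 * k"
    and "u < 6 * k" "v < 6 * k" "u \<noteq> v" "circ_adj (6 * k) {1, x, 3 * k} u v"
  shows "arc_shifted_colouring (2 * k) u \<noteq> arc_shifted_colouring (2 * k) v"
proof -
  have ordered: "arc_shifted_colouring (2 * k) i \<noteq> arc_shifted_colouring (2 * k) j"
    if "i < j" "j < 6 * k" "circ_adj (6 * k) {1, x, 3 * k} i j" for i j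
  proof (rule arc_shifted_colouring_differs)
    have "nat \<bar>int i - int j\<bar> = j - i"
      using that(1) by simp
    then have "min (j - i) (6 * k - (j - i)) \<in> {1, x, 3 * k}"
      using that(3) by (simp only: circ_adj_def Let_def)
    then show "(j - i) mod 3 = 1 \<and> j - i \<le> 2 * k
       \<or> (j - i) mod 3 = 0 \<and> 2 * k \<le> j - i \<and> j - i < 2 * (2 * k)
       \<or> (j - i) mod 3 \<noteq> 1 \<and> 2 * (2 * k) \<le> j - i"
      using circulant_distance_cases[OF assms(1,2)] that(2) by simp
  qed (use that in simp_all)
  show ?thesis
    using assms(3-6) ordered[of u v] ordered[of v u] circ_adj_commute
    by (metis linorder_neqE_nat)
qed

theorem corollary4:
  fixes n x :: nat
  assumes "1 < x" and "x < n"
    and "n mod 3 = 0" and "x mod 3 = 1" and "3 * x \<le> 2 * n"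
  shows "word_representable (circ_vertices (2 * n)) (circ_adj (2 * n) {1, x, n})"
proof -
  obtain k where n: "n = 3 * k"
    using assms(3) by auto
  have "x \<le> 2 * k"
    using assms(5) unfolding n by simp
  have "word_representable {0..<6 * k} (circ_adj (6 * k) {1, x, 3 * k})"
  proof (rule word_representable_if_three_colourable[where c = "arc_shifted_colouring (2 * k)"])
    show "arc_shifted_colouring (2 * k) v < 3" for v
      by (simp add: arc_shifted_colouring_def)
  qed (use circ_adj_commute arc_shifted_colouring_proper[OF assms(4) \<open>x \<le> 2 * k\<close>] in auto)
  then show ?thesis
    unfolding circ_vertices_def n by simp
qed

end
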